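(* Let $H_0\in\mathbb{C}^{n\times n}$ be a Hermitian positive-semidefinite matrix. Then $H_0$ is isotropic, i.e. $H_0 H_0^T = 0_{n\times n}$, if and only if there exist a complex orthogonal matrix $R\in\mathbb{C}^{n\times n}$ ($R R^T = R^T R = \mathbb{I}_n$), an integer $m\ge 1$, and a matrix $O\in\mathbb{C}^{m\times n}$ with $O O^T = 0_{m\times m}$, such that $H_0 = R^\dagger O^\dagger O R$.
   Context: $^T$ denotes transpose (no conjugation), $^\dagger$ conjugate transpose, $\mathbb{I}_n$ the $n\times n$ identity. *)

theory Defs
  imports "Jordan_Normal_Form.Matrix"
begin

definition adj_mat :: "complex mat \<Rightarrow> complex mat" where
  "adj_mat A = transpose_mat (map_mat cnj A)"

definition hermitian_mat :: "complex mat \<Rightarrow> bool" where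
  "hermitian_mat A \<longleftrightarrow> adj_mat A = A"

definition psd_mat :: "nat \<Rightarrow> complex mat \<Rightarrow> bool" where
  "psd_mat n A \<longleftrightarrow> A \<in> carrier_mat n n \<and>
     (\<forall>v \<in> carrier_vec n. let q = (\<Sum>i<n. cnj (v $ i) * (A *\<^sub>v v) $ i)
                          in q \<in> \<real> \<and> 0 \<le> Re q)"

end

theory Submission
  imports Defs
begin

(* If H0 = R^dagger O^dagger O R with R R^T = 1 and O O^T = 0, then
   H0 H0^T = R^dagger O^dagger (O O^T) conj(O) conj(R) = 0.
   Conversely, a Hermitian positive-semidefinite H0 has a Gram factorisation H0 = G^dagger G,
   obtained by Cholesky elimination: the diagonal entry of the first non-zero row is positive and
   subtracting the rank-one form of that row leaves a positive-semidefinite Schur complement.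
   For M = G G^T and Z = G^dagger M one gets Z Z^dagger = H0 H0^T H0 = 0, so Z = 0; then
   M conj(G) = Z^T = 0, hence M M^dagger = M conj(G) G^dagger = 0 and M = 0.
   So R = 1 and O = G witness the decomposition. *)

definition quad_form :: "nat \<Rightarrow> (nat \<Rightarrow> nat \<Rightarrow> complex) \<Rightarrow> (nat \<Rightarrow> complex) \<Rightarrow> complex" where
  "quad_form n f v = (\<Sum>i<n. \<Sum>j<n. cnj (v i) * f i j * v j)"

definition hermitian_form :: "nat \<Rightarrow> (nat \<Rightarrow> nat \<Rightarrow> complex) \<Rightarrow> bool" where
  "hermitian_form n f \<longleftrightarrow> (\<forall>i<n. \<forall>j<n. f j i = cnj (f i j))"

definition psd_form :: "nat \<Rightarrow> (nat \<Rightarrow> nat \<Rightarrow> complex) \<Rightarrow> bool" where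
  "psd_form n f \<longleftrightarrow> (\<forall>v. 0 \<le> Re (quad_form n f v))"

lemma hermitian_formD: "hermitian_form n f \<Longrightarrow> i < n \<Longrightarrow> j < n \<Longrightarrow> f j i = cnj (f i j)"
  unfolding hermitian_form_def by blast

lemma quad_form_update:
  assumes "hermitian_form n f" and "k < n"
  shows "quad_form n f (v(k := v k + t)) =
    quad_form n f v + cnj t * (\<Sum>j<n. f k j * v j) + t * cnj (\<Sum>j<n. f k j * v j) + cnj t * t * f k k"
proof -
  define s where "s = (\<Sum>j<n. f k j * v j)"
  have expand: "cnj ((v(k := v k + t)) i) * f i j * (v(k := v k + t)) j =
      cnj (v i) * f i j * v j + (if j = k then cnj (v i) * f i k * t else 0)
      + (if i = k then cnj t * f k j * v j else 0) + (if i = k \<and> j = k then cnj t * t * f k k else 0)" for i j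
    by (cases "i = k"; cases "j = k"; simp add: algebra_simps)
  have "(\<Sum>i<n. \<Sum>j<n. if j = k then cnj (v i) * f i k * t else 0) = (\<Sum>i<n. cnj (v i) * f i k * t)"
    using assms(2) by simp
  also have "\<dots> = (\<Sum>i<n. t * cnj (f k i * v i))"
  proof (rule sum.cong[OF refl])
    fix i assume "i \<in> {..<n}"
    then have "f i k = cnj (f k i)"
      using hermitian_formD[OF assms(1), of k i] assms(2) by simp
    then show "cnj (v i) * f i k * t = t * cnj (f k i * v i)"
      by simp
  qed
  also have "\<dots> = t * cnj s"
    by (simp add: s_def sum_distrib_left)
  finally have column: "(\<Sum>i<n. \<Sum>j<n. if j = k then cnj (v i) * f i k * t else 0) = t * cnj s" .
  have "(\<Sum>i<n. \<Sum>j<n. if i = k then cnj t * f k j * v j else 0) =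
      (\<Sum>i<n. if i = k then (\<Sum>j<n. cnj t * f k j * v j) else 0)"
    by (intro sum.cong) auto
  also have "\<dots> = cnj t * s"
    using assms(2) by (simp add: s_def sum_distrib_left mult.assoc)
  finally have row: "(\<Sum>i<n. \<Sum>j<n. if i = k then cnj t * f k j * v j else 0) = cnj t * s" .
  have "(\<Sum>i<n. \<Sum>j<n. if i = k \<and> j = k then cnj t * t * f k k else 0) =
      (\<Sum>i<n. if i = k then (\<Sum>j<n. if j = k then cnj t * t * f k k else 0) else 0)"
    by (intro sum.cong) auto
  also have "\<dots> = cnj t * t * f k k"
    using assms(2) by simp
  finally have diagonal: "(\<Sum>i<n. \<Sum>j<n. if i = k \<and> j = k then cnj t * t * f k k else 0) = cnj t * t * f k k" .
  show ?thesis
    unfolding quad_form_def expand sum.distrib column row diagonal s_def by (simp add: algebra_simps)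
qed

lemma quad_form_unit:
  assumes "j < n"
  shows "quad_form n f (\<lambda>i. of_bool (i = j)) = f j j"
proof -
  have "cnj (of_bool P) = (of_bool P :: complex)" for P
    by simp
  then show ?thesis
    using assms by (simp add: quad_form_def, subst sum.remove[of _ j], auto)
qed

lemma hermitian_form_diag_real:
  assumes "hermitian_form n f" and "k < n"
  shows "f k k = of_real (Re (f k k))"
proof -
  have "cnj (f k k) = f k k"
    using hermitian_formD[OF assms(1) assms(2) assms(2)] by (rule sym)
  then have "f k k \<in> \<real>"
    by (simp add: Reals_cnj_iff)
  then show ?thesis
    by simp
qed

lemma psd_form_diag_nonneg:
  assumes "psd_form n f" and "k < n"
  shows "0 \<le> Re (f k k)"
proof -
  have "0 \<le> Re (quad_form n f (\<lambda>i. of_bool (i = k)))"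
    using assms(1) unfolding psd_form_def by blast
  then show ?thesis
    by (simp add: quad_form_unit[OF assms(2)])
qed

lemma psd_form_zero_diag_row:
  assumes herm: "hermitian_form n f" and psd: "psd_form n f"
    and "k < n" and "j < n" and diag: "f k k = 0"
  shows "f k j = 0"
proof (rule ccontr)
  \<comment> \<open>at v = e_j - x f_kj e_k the form is f_jj - 2 x |f_kj|^2, negative for large x\<close>
  assume "f k j \<noteq> 0"
  define c where "c = f k j"
  define x where "x = (Re (f j j) + 1) / (2 * (cmod c)^2)"
  define v :: "nat \<Rightarrow> complex" where "v = (\<lambda>i. of_bool (i = j))"
  define t where "t = - of_real x * c"
  define w where "w = v(k := v k + t)"
  have "c * cnj c = of_real ((cmod c)^2)"
    using complex_norm_square[of c] by simp
  then have "quad_form n f w = f j j - of_real (2 * x * (cmod c)^2)"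
    using quad_form_update[OF herm \<open>k < n\<close>, of v t] quad_form_unit[OF \<open>j < n\<close>, of f] \<open>j < n\<close> diag
    unfolding w_def by (simp add: v_def t_def c_def algebra_simps)
  also have "2 * x * (cmod c)^2 = Re (f j j) + 1"
    using \<open>f k j \<noteq> 0\<close> by (simp add: x_def c_def)
  finally have "Re (quad_form n f w) = -1"
    by simp
  moreover have "0 \<le> Re (quad_form n f w)"
    using psd unfolding psd_form_def by blast
  ultimately show False
    by simp
qed

lemma psd_form_schur_complement:
  assumes herm: "hermitian_form n f" and psd: "psd_form n f" and "k < n"
    and diag: "f k k = of_real a" and "a > 0"
  defines "r \<equiv> \<lambda>j. f k j / of_real (sqrt a)"
  shows "psd_form n (\<lambda>i j. f i j - cnj (r i) * r j)"
  unfolding psd_form_def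
proof
  \<comment> \<open>the Schur complement's form at v is the original form at v - (s / f_kk) e_k\<close>
  fix v
  define s where "s = (\<Sum>j<n. f k j * v j)"
  define t where "t = - s / of_real a"
  have sqrt_sq: "of_real (sqrt a) * of_real (sqrt a) = (of_real a :: complex)"
    using \<open>a > 0\<close> by (simp flip: of_real_mult)
  have "quad_form n (\<lambda>i j. f i j - cnj (r i) * r j) v =
      quad_form n f v - cnj (\<Sum>j<n. r j * v j) * (\<Sum>j<n. r j * v j)"
    unfolding quad_form_def cnj_sum sum_product
    by (simp add: algebra_simps sum_subtractf)
  also have "\<dots> = quad_form n f v - cnj s * s / of_real a"
    unfolding r_def s_def sqrt_sq[symmetric]
    by (simp add: sum_divide_distrib[symmetric] field_simps)
  also have "\<dots> = quad_form n f (v(k := v k + t))"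
    using \<open>a > 0\<close> unfolding quad_form_update[OF herm \<open>k < n\<close>] s_def[symmetric] diag t_def
    by (simp add: field_simps)
  finally show "0 \<le> Re (quad_form n (\<lambda>i j. f i j - cnj (r i) * r j) v)"
    using psd unfolding psd_form_def by simp
qed

lemma hermitian_form_minus_rank_one:
  assumes "hermitian_form n f"
  shows "hermitian_form n (\<lambda>i j. f i j - cnj (r i) * r j)"
  unfolding hermitian_form_def
proof (intro allI impI)
  fix i j assume "i < n" "j < n"
  then have "f j i = cnj (f i j)"
    by (rule hermitian_formD[OF assms])
  then show "f j i - cnj (r j) * r i = cnj (f i j - cnj (r i) * r j)"
    by simp
qed

lemma schur_complement_rows_vanish:
  assumes herm: "hermitian_form n f" and "k < n" and rows: "\<forall>i<k. \<forall>j<n. f i j = 0"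
    and diag: "f k k = of_real a" and "a > 0"
  defines "r \<equiv> \<lambda>j. f k j / of_real (sqrt a)"
  shows "\<forall>i<Suc k. \<forall>j<n. f i j - cnj (r i) * r j = 0"
proof -
  have "r i = 0" if "i < k" for i
  proof -
    have "f k i = cnj (f i k)"
      using hermitian_formD[OF herm, of i k] that \<open>k < n\<close> by simp
    then show ?thesis
      using rows that \<open>k < n\<close> by (simp add: r_def)
  qed
  moreover have "cnj (r k) * r j = f k j" for j
  proof -
    have "of_real (sqrt a) * of_real (sqrt a) = (of_real a :: complex)"
      using \<open>a > 0\<close> by (simp flip: of_real_mult)
    then show ?thesis
      using \<open>a > 0\<close> unfolding r_def diag by (simp add: field_simps)
  qed
  ultimately show ?thesis
    using rows by (auto simp: less_Suc_eq)
qed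

lemma psd_form_gram_factorization_from:
  assumes "k \<le> n" and "hermitian_form n f" and "psd_form n f" and "\<forall>i<k. \<forall>j<n. f i j = 0"
  shows "\<exists>(m::nat) g. m \<ge> 1 \<and> (\<forall>i<n. \<forall>j<n. f i j = (\<Sum>l<m. cnj (g l i) * g l j))"
  using assms
proof (induction k arbitrary: f rule: inc_induct)
  case base
  then show ?case
    by (intro exI[of _ 1] exI[of _ "\<lambda>_ _. 0"]) auto
next
  case (step k)
  note herm = \<open>hermitian_form n f\<close> and psd = \<open>psd_form n f\<close>
  have "k < n"
    using step.hyps by simp
  define a where "a = Re (f k k)"
  have diag: "f k k = of_real a"
    unfolding a_def by (rule hermitian_form_diag_real[OF herm \<open>k < n\<close>])
  have "a \<ge> 0"
    unfolding a_def by (rule psd_form_diag_nonneg[OF psd \<open>k < n\<close>])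
  show ?case
  proof (cases "a = 0")
    case True
    then have "f k j = 0" if "j < n" for j
      using psd_form_zero_diag_row[OF herm psd \<open>k < n\<close> that] diag by simp
    then have "\<forall>i<Suc k. \<forall>j<n. f i j = 0"
      using step.prems(3) less_Suc_eq by auto
    then show ?thesis
      using step.IH herm psd by blast
  next
    case False
    with \<open>a \<ge> 0\<close> have "a > 0"
      by simp
    define r where "r = (\<lambda>j. f k j / of_real (sqrt a))"
    define f' where "f' = (\<lambda>i j. f i j - cnj (r i) * r j)"
    have herm': "hermitian_form n f'"
      unfolding f'_def by (rule hermitian_form_minus_rank_one[OF herm])
    have psd': "psd_form n f'"
      unfolding f'_def r_def
      by (rule psd_form_schur_complement[OF herm psd \<open>k < n\<close> diag \<open>a > 0\<close>])
    have "\<forall>i<Suc k. \<forall>j<n. f' i j = 0"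
      unfolding f'_def r_def
      by (rule schur_complement_rows_vanish[OF herm \<open>k < n\<close> step.prems(3) diag \<open>a > 0\<close>])
    then obtain m :: nat and g where g: "\<forall>i<n. \<forall>j<n. f' i j = (\<Sum>l<m. cnj (g l i) * g l j)"
      using step.IH herm' psd' by blast
    define g' where "g' = (\<lambda>l. if l = 0 then r else g (l - 1))"
    have "f i j = (\<Sum>l<Suc m. cnj (g' l i) * g' l j)" if "i < n" "j < n" for i j
    proof -
      have "f i j = cnj (r i) * r j + f' i j"
        unfolding f'_def by simp
      also have "\<dots> = (\<Sum>l<Suc m. cnj (g' l i) * g' l j)"
        using g that unfolding g'_def sum.lessThan_Suc_shift by simp
      finally show ?thesis .
    qed
    then show ?thesis
      by (intro exI[of _ "Suc m"] exI[of _ g']) simp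
  qed
qed

lemma psd_form_gram_factorization:
  assumes "hermitian_form n f" and "psd_form n f"
  shows "\<exists>(m::nat) g. m \<ge> 1 \<and> (\<forall>i<n. \<forall>j<n. f i j = (\<Sum>l<m. cnj (g l i) * g l j))"
  using psd_form_gram_factorization_from[of 0 n f] assms by simp

lemma adj_mat_dim [simp]:
  "dim_row (adj_mat A) = dim_col A" "dim_col (adj_mat A) = dim_row A"
  unfolding adj_mat_def by simp_all

lemma adj_mat_carrier [simp]: "A \<in> carrier_mat r c \<Longrightarrow> adj_mat A \<in> carrier_mat c r"
  unfolding adj_mat_def by simp

lemma index_adj_mat [simp]:
  "i < dim_col A \<Longrightarrow> j < dim_row A \<Longrightarrow> adj_mat A $$ (i, j) = cnj (A $$ (j, i))"
  unfolding adj_mat_def by simp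

lemma adj_mat_one [simp]: "adj_mat (1\<^sub>m n) = 1\<^sub>m n"
  by (rule eq_matI) auto

lemma transpose_adj_mat: "transpose_mat (adj_mat A) = map_mat cnj A"
  unfolding adj_mat_def by simp

lemma adj_mat_mult:
  assumes "A \<in> carrier_mat r k" and "B \<in> carrier_mat k c"
  shows "adj_mat (A * B) = adj_mat B * adj_mat A"
proof (rule eq_matI)
  fix i j assume "i < dim_row (adj_mat B * adj_mat A)" "j < dim_col (adj_mat B * adj_mat A)"
  then show "adj_mat (A * B) $$ (i, j) = (adj_mat B * adj_mat A) $$ (i, j)"
    using assms unfolding adj_mat_def by (simp add: scalar_prod_def mult.commute)
qed (use assms in \<open>simp_all add: adj_mat_def\<close>)

lemma mult_adj_mat_self_eq_0:
  assumes A: "A \<in> carrier_mat r c" and "A * adj_mat A = 0\<^sub>m r r"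
  shows "A = 0\<^sub>m r c"
proof (rule eq_matI)
  fix i j assume "i < dim_row (0\<^sub>m r c :: complex mat)" and "j < dim_col (0\<^sub>m r c :: complex mat)"
  then have "i < r" "j < c" by auto
  have "col (adj_mat A) i = conjugate (row A i)"
    using A \<open>i < r\<close> by (intro eq_vecI) auto
  then have "row A i \<bullet>c row A i = (A * adj_mat A) $$ (i, i)"
    using A \<open>i < r\<close> by simp
  also have "\<dots> = 0"
    using assms(2) \<open>i < r\<close> by simp
  finally have "row A i = 0\<^sub>v c"
    using conjugate_square_eq_0_vec[of "row A i" c] A by (simp add: carrier_vecI)
  have "A $$ (i, j) = row A i $ j"
    using A \<open>i < r\<close> \<open>j < c\<close> by simp
  also have "\<dots> = 0"
    using \<open>row A i = 0\<^sub>v c\<close> \<open>j < c\<close> by simp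
  finally show "A $$ (i, j) = 0\<^sub>m r c $$ (i, j)"
    using \<open>i < r\<close> \<open>j < c\<close> by simp
qed (use A in simp_all)

lemma mult_mat_assoc:
  assumes "dim_col A = dim_row B" and "dim_col B = dim_row C"
  shows "A * B * C = A * (B * C)"
  using assms by (intro assoc_mult_mat[of A "dim_row A" "dim_col A" B "dim_col B" C "dim_col C"] carrier_matI) auto

lemma adj_mat_adj_mat [simp]: "adj_mat (adj_mat A) = A"
  by (rule eq_matI) auto

lemma adj_mat_transpose: "adj_mat (transpose_mat A) = map_mat cnj A"
  by (rule eq_matI) auto

lemma isotropic_gram_iff:
  assumes G: "G \<in> carrier_mat m n"
  shows "(adj_mat G * G) * transpose_mat (adj_mat G * G) = 0\<^sub>m n n \<longleftrightarrow>
    G * transpose_mat G = 0\<^sub>m m m"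
proof -
  define M where "M = G * transpose_mat G"
  have M: "M \<in> carrier_mat m m"
    using G unfolding M_def by simp
  have dims: "dim_row G = m" "dim_col G = n" "dim_row M = m" "dim_col M = m"
    using G M by auto
  have carriers: "adj_mat G \<in> carrier_mat n m" "map_mat cnj G \<in> carrier_mat m n"
    using G by simp_all
  have "transpose_mat (adj_mat G * G) = transpose_mat G * map_mat cnj G"
    using transpose_mult[OF carriers(1) G] by (simp add: transpose_adj_mat)
  then have gram_iso: "(adj_mat G * G) * transpose_mat (adj_mat G * G) = adj_mat G * M * map_mat cnj G"
    unfolding M_def using dims by (simp add: mult_mat_assoc)
  have adj_M: "adj_mat M = map_mat cnj G * adj_mat G"
    using G unfolding M_def by (simp add: adj_mat_mult adj_mat_transpose)
  show ?thesis
    unfolding M_def[symmetric]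
  proof
    assume iso: "(adj_mat G * G) * transpose_mat (adj_mat G * G) = 0\<^sub>m n n"
    define Z where "Z = adj_mat G * M"
    have Z: "Z \<in> carrier_mat n m"
      unfolding Z_def using carriers(1) M by (rule mult_carrier_mat)
    have "Z * adj_mat Z = (adj_mat G * M * map_mat cnj G) * (adj_mat G * G)"
      unfolding Z_def adj_mat_mult[OF carriers(1) M] adj_M adj_mat_adj_mat
      using dims by (simp add: mult_mat_assoc)
    also have "\<dots> = 0\<^sub>m n n"
      unfolding gram_iso[symmetric] iso using carriers(1) G by simp
    finally have "Z = 0\<^sub>m n m"
      by (rule mult_adj_mat_self_eq_0[OF Z])
    moreover have "transpose_mat Z = M * map_mat cnj G"
      using transpose_mult[OF carriers(1) M] transpose_mult[OF G transpose_carrier_mat[THEN iffD2, OF G]]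
      unfolding Z_def M_def by (simp add: transpose_adj_mat)
    ultimately have "M * map_mat cnj G = 0\<^sub>m m n"
      by simp
    have "M * adj_mat M = (M * map_mat cnj G) * adj_mat G"
      unfolding adj_M using dims by (simp add: mult_mat_assoc)
    also have "\<dots> = 0\<^sub>m m m"
      unfolding \<open>M * map_mat cnj G = 0\<^sub>m m n\<close> using carriers(1) by (rule left_mult_zero_mat)
    finally show "M = 0\<^sub>m m m"
      by (rule mult_adj_mat_self_eq_0[OF M])
  next
    assume "M = 0\<^sub>m m m"
    then show "(adj_mat G * G) * transpose_mat (adj_mat G * G) = 0\<^sub>m n n"
      unfolding gram_iso using carriers by simp
  qed
qed

lemma isotropic_orthogonal_congruence:
  assumes H: "H \<in> carrier_mat n n" and R: "R \<in> carrier_mat n n"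
    and RR: "R * transpose_mat R = 1\<^sub>m n" and iso: "H * transpose_mat H = 0\<^sub>m n n"
  shows "(adj_mat R * H * R) * transpose_mat (adj_mat R * H * R) = 0\<^sub>m n n"
proof -
  have dims: "dim_row H = n" "dim_col H = n" "dim_row R = n" "dim_col R = n"
    using H R by auto
  have "transpose_mat (adj_mat R * H * R) = transpose_mat R * (transpose_mat H * map_mat cnj R)"
    using transpose_mult[OF mult_carrier_mat[OF adj_mat_carrier[OF R] H] R]
      transpose_mult[OF adj_mat_carrier[OF R] H]
    by (simp add: transpose_adj_mat)
  then have "(adj_mat R * H * R) * transpose_mat (adj_mat R * H * R) =
      adj_mat R * (H * (R * transpose_mat R) * transpose_mat H) * map_mat cnj R"
    using dims by (simp add: mult_mat_assoc)
  also have "\<dots> = 0\<^sub>m n n"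
    unfolding RR right_mult_one_mat[OF H] iso
    using right_mult_zero_mat[OF adj_mat_carrier[OF R]] left_mult_zero_mat[OF map_carrier_mat[THEN iffD2, OF R]]
    by simp
  finally show ?thesis .
qed

lemma hermitian_form_of_mat:
  assumes "A \<in> carrier_mat n n" and "hermitian_mat A"
  shows "hermitian_form n (\<lambda>i j. A $$ (i, j))"
  unfolding hermitian_form_def
proof (intro allI impI)
  fix i j assume "i < n" "j < n"
  have "A $$ (j, i) = adj_mat A $$ (j, i)"
    using assms(2) unfolding hermitian_mat_def by simp
  also have "\<dots> = cnj (A $$ (i, j))"
    using assms(1) \<open>i < n\<close> \<open>j < n\<close> by simp
  finally show "A $$ (j, i) = cnj (A $$ (i, j))" .
qed

lemma psd_form_of_mat:
  assumes "A \<in> carrier_mat n n" and "psd_mat n A"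
  shows "psd_form n (\<lambda>i j. A $$ (i, j))"
  unfolding psd_form_def
proof
  fix v :: "nat \<Rightarrow> complex"
  define w where "w = vec n v"
  have quad_form_eq: "quad_form n (\<lambda>i j. A $$ (i, j)) v = (\<Sum>i<n. cnj (w $ i) * (A *\<^sub>v w) $ i)"
    unfolding quad_form_def
  proof (rule sum.cong[OF refl])
    fix i assume "i \<in> {..<n}"
    then show "(\<Sum>j<n. cnj (v i) * A $$ (i, j) * v j) = cnj (w $ i) * (A *\<^sub>v w) $ i"
      using assms(1)
      by (simp add: w_def mult_mat_vec_def scalar_prod_def atLeast0LessThan sum_distrib_left mult.assoc)
  qed
  have "w \<in> carrier_vec n"
    by (simp add: w_def)
  then have "0 \<le> Re (\<Sum>i<n. cnj (w $ i) * (A *\<^sub>v w) $ i)"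
    using assms(2) unfolding psd_mat_def Let_def by blast
  then show "0 \<le> Re (quad_form n (\<lambda>i j. A $$ (i, j)) v)"
    unfolding quad_form_eq .
qed

lemma psd_mat_gram_factorization:
  assumes "H \<in> carrier_mat n n" and "hermitian_mat H" and "psd_mat n H"
  obtains m G where "m \<ge> 1" and "G \<in> carrier_mat m n" and "H = adj_mat G * G"
proof -
  obtain m :: nat and g where "m \<ge> 1" and g: "\<forall>i<n. \<forall>j<n. H $$ (i, j) = (\<Sum>l<m. cnj (g l i) * g l j)"
    using psd_form_gram_factorization[OF hermitian_form_of_mat[OF assms(1,2)] psd_form_of_mat[OF assms(1,3)]]
    by blast
  define G where "G = mat m n (\<lambda>(l, j). g l j)"
  have "H = adj_mat G * G"
    using assms(1) g by (intro eq_matI) (auto simp: G_def scalar_prod_def atLeast0LessThan)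
  moreover have "G \<in> carrier_mat m n"
    by (simp add: G_def)
  ultimately show ?thesis
    using that \<open>m \<ge> 1\<close> by blast
qed

theorem theorem2:
  fixes n :: nat and H0 :: "complex mat"
  assumes "H0 \<in> carrier_mat n n"
    and "hermitian_mat H0"
    and "psd_mat n H0"
  shows "H0 * transpose_mat H0 = 0\<^sub>m n n \<longleftrightarrow>
    (\<exists>(R :: complex mat) (m :: nat) (Om :: complex mat).
        R \<in> carrier_mat n n \<and> R * transpose_mat R = 1\<^sub>m n \<and> transpose_mat R * R = 1\<^sub>m n \<and>
        m \<ge> 1 \<and> Om \<in> carrier_mat m n \<and> Om * transpose_mat Om = 0\<^sub>m m m \<and>
        H0 = adj_mat R * adj_mat Om * Om * R)"
proof
  assume iso: "H0 * transpose_mat H0 = 0\<^sub>m n n"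
  obtain m G where "m \<ge> 1" and G: "G \<in> carrier_mat m n" and H0: "H0 = adj_mat G * G"
    using psd_mat_gram_factorization[OF assms] .
  have "G * transpose_mat G = 0\<^sub>m m m"
    using iso isotropic_gram_iff[OF G] unfolding H0 by simp
  moreover have "H0 = adj_mat (1\<^sub>m n) * adj_mat G * G * 1\<^sub>m n"
    unfolding H0 adj_mat_one
    using left_mult_one_mat[OF adj_mat_carrier[OF G]] right_mult_one_mat[OF mult_carrier_mat[OF adj_mat_carrier[OF G] G]]
    by simp
  ultimately show "\<exists>R m Om. R \<in> carrier_mat n n \<and> R * transpose_mat R = 1\<^sub>m n \<and> transpose_mat R * R = 1\<^sub>m n \<and>
      m \<ge> 1 \<and> Om \<in> carrier_mat m n \<and> Om * transpose_mat Om = 0\<^sub>m m m \<and>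
      H0 = adj_mat R * adj_mat Om * Om * R"
    using \<open>m \<ge> 1\<close> G by (intro exI[of _ "1\<^sub>m n"] exI[of _ m] exI[of _ G]) simp
next
  assume "\<exists>R m Om. R \<in> carrier_mat n n \<and> R * transpose_mat R = 1\<^sub>m n \<and> transpose_mat R * R = 1\<^sub>m n \<and>
      m \<ge> 1 \<and> Om \<in> carrier_mat m n \<and> Om * transpose_mat Om = 0\<^sub>m m m \<and>
      H0 = adj_mat R * adj_mat Om * Om * R"
  then obtain R m Om where R: "R \<in> carrier_mat n n" and RR: "R * transpose_mat R = 1\<^sub>m n"
    and Om: "Om \<in> carrier_mat m n" and iso: "Om * transpose_mat Om = 0\<^sub>m m m"
    and H0: "H0 = adj_mat R * adj_mat Om * Om * R"
    by blast
  have "H0 = adj_mat R * (adj_mat Om * Om) * R"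
    unfolding H0 using R Om by (simp add: mult_mat_assoc)
  moreover have "(adj_mat Om * Om) * transpose_mat (adj_mat Om * Om) = 0\<^sub>m n n"
    using isotropic_gram_iff[OF Om] iso by simp
  ultimately show "H0 * transpose_mat H0 = 0\<^sub>m n n"
    using isotropic_orthogonal_congruence[OF mult_carrier_mat[OF adj_mat_carrier[OF Om] Om] R RR] by simp
qed

end
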